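(* Let $N\ge 3$ and $m\ge 1$ be integers, and let $\Gamma=\Gamma^1_{A_{N-3}}$ be the stable translation quiver of diagonals of a regular $N$-gon, with translation $\tau_1$. Consider its $m$-th power $(\Gamma^m,\tau_1^m)$. (1) The quiver $\Gamma^m$ contains the translation quiver of $m$-diagonals if and only if $N=nm+2$ for some positive integer $n$. More precisely: if $N$ is not of this form, the $N$-gon has no $m$-diagonals. If $N=nm+2$, the subquiver of $\Gamma^m$ formed by the $m$-diagonals and all arrows of $\Gamma^m$ between them coincides with $\Gamma^m_{A_{n-1}}$. (2) For every $n\ge 2$, $\Gamma^m_{A_{n-1}}$ (with translation $\tau_m=\tau_1^m$) is a connected component of $(\Gamma^1_{A_{nm-1}})^m$.
   Context: Let $\Pi$ be a regular $N$-gon with vertices labelled $1,\dots,N$ clockwise; labels are taken modulo $N$. A diagonal with endpoints $i,j$ is written $(i,j)=(j,i)$. The quiver $\Gamma^1_{A_{N-3}}$ has as vertices all diagonals of $\Pi$. There is an arrow $D\to D'$ exactly when $D,D'$ share an endpoint $i$, with other endpoints $j,j'$, such that $D$, $D'$ and the arc from $j$ to $j'$ not containing $i$ form a triangle, and $D$ is rotated onto $D'$ by a clockwise rotation about $i$; i.e. $(i,j)\to(i,j+1)$. The translation $\tau_1$ is the anticlockwise rotation about the centre through $2\pi/N$, i.e. $(i,j)\mapsto(i-1,j-1)$. For $m\ge 1$, an $m$-diagonal of an $(nm+2)$-gon is a diagonal dividing it into an $(mj+2)$-gon and an $(m(n-j)+2)$-gon for some $1\le j\le n-1$; more generally, an $m$-diagonal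 of the $N$-gon is a diagonal dividing it into two polygons whose numbers of sides are both congruent to $2$ modulo $m$. The quiver $\Gamma^m_{A_{n-1}}$ has as vertices the $m$-diagonals of the $(nm+2)$-gon, with an arrow $(i,j)\to(i,j+m)$ whenever both are $m$-diagonals. Equivalently, there is an arrow $D\to D'$ when they share an endpoint $i$, bound an $(m+2)$-gon together with the arc between their other endpoints not containing $i$, and $D$ rotates clockwise about $i$ onto $D'$. Its translation $\tau_m$ is the rotation $(i,j)\mapsto(i-m,j-m)$. For a stable translation quiver $(\Gamma,\tau)$, a path $x_0\to\cdots\to x_m$ is sectional if $\tau x_{i+1}\ne x_{i-1}$ for $i=1,\dots,m-1$. The quiver $\Gamma^m$ has the same vertices as $\Gamma$ and one arrow $x\to y$ for each sectional path of length $m$ from $x$ to $y$; $\tau^m$ is the $m$-fold composite of $\tau$. A connected component is a stable translation subquiver that is connected (not a disjoint union of two non-empty stable translation subquivers) and is a union of connected components of the underlying graph. *)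

theory Defs
  imports Main
begin

text \<open>Vertices of the regular N-gon are the integers 0,...,N-1 (labels taken mod N).
  A diagonal (i,j) = (j,i) is represented by the two-element set of its endpoints.\<close>

definition dg :: "nat \<Rightarrow> int \<Rightarrow> int \<Rightarrow> int set" where
  "dg N i j = {i mod int N, j mod int N}"

definition is_diag :: "nat \<Rightarrow> int set \<Rightarrow> bool" where
  "is_diag N D \<longleftrightarrow> (\<exists>i j. D = dg N i j \<and>
      (j - i) mod int N \<noteq> 0 \<and> (j - i) mod int N \<noteq> 1 \<and> (j - i) mod int N \<noteq> int N - 1)"

definition arrow1 :: "nat \<Rightarrow> int set \<Rightarrow> int set \<Rightarrow> bool" where
  "arrow1 N D D' \<longleftrightarrow> is_diag N D \<and> is_diag N D' \<and>
      (\<exists>i j. D = dg N i j \<and> D' = dg N i (j + 1))"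

definition tau1 :: "nat \<Rightarrow> int set \<Rightarrow> int set" where
  "tau1 N D = (\<lambda>x. (x - 1) mod int N) ` D"

text \<open>Sectional paths of Gamma^1 (paths given by their vertex sequences; Gamma^1 has
  at most one arrow between two vertices).\<close>
definition sectional :: "nat \<Rightarrow> int set list \<Rightarrow> bool" where
  "sectional N p \<longleftrightarrow>
     (\<forall>k. k + 1 < length p \<longrightarrow> arrow1 N (p ! k) (p ! (k + 1))) \<and>
     (\<forall>k. 1 \<le> k \<and> k + 1 < length p \<longrightarrow> tau1 N (p ! (k + 1)) \<noteq> p ! (k - 1))"

definition sect_paths :: "nat \<Rightarrow> nat \<Rightarrow> int set \<Rightarrow> int set \<Rightarrow> int set list set" where
  "sect_paths N m x y =
     {p. length p = m + 1 \<and> hd p = x \<and> last p = y \<and> sectional N p}"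

text \<open>Number of arrows x -> y in the quiver (Gamma^1)^m: one per sectional path of length m.\<close>
definition pow_arrows :: "nat \<Rightarrow> nat \<Rightarrow> int set \<Rightarrow> int set \<Rightarrow> nat" where
  "pow_arrows N m x y = card (sect_paths N m x y)"

text \<open>m-diagonal of the N-gon: a diagonal dividing the polygon into two polygons whose
  numbers of sides are both congruent to 2 modulo m. The diagonal (i,j) cuts off the
  polygon with vertices i, i+1, ..., j, which has ((j-i) mod N) + 1 sides.\<close>
definition m_diag :: "nat \<Rightarrow> nat \<Rightarrow> int set \<Rightarrow> bool" where
  "m_diag N m D \<longleftrightarrow> is_diag N D \<and> (\<exists>i j. D = dg N i j \<and>
      ((j - i) mod int N + 1) mod int m = 2 mod int m \<and>
      ((i - j) mod int N + 1) mod int m = 2 mod int m)"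

definition arrowA :: "nat \<Rightarrow> nat \<Rightarrow> int set \<Rightarrow> int set \<Rightarrow> bool" where
  "arrowA N m D D' \<longleftrightarrow> m_diag N m D \<and> m_diag N m D' \<and>
      (\<exists>i j. D = dg N i j \<and> D' = dg N i (j + int m))"

definition tau_m :: "nat \<Rightarrow> nat \<Rightarrow> int set \<Rightarrow> int set" where
  "tau_m N m D = (\<lambda>x. (x - int m) mod int N) ` D"

text \<open>Stable translation subquivers of ((Gamma^1)^m, tau_1^m), given by their vertex sets
  (full subquivers on a set of vertices closed under tau_1^m and its inverse).\<close>
definition stable_sub :: "nat \<Rightarrow> nat \<Rightarrow> int set set \<Rightarrow> bool" where
  "stable_sub N m S \<longleftrightarrow> S \<subseteq> Collect (is_diag N) \<and> (tau1 N ^^ m) ` S = S"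

definition has_arrow_m :: "nat \<Rightarrow> nat \<Rightarrow> int set \<Rightarrow> int set \<Rightarrow> bool" where
  "has_arrow_m N m x y \<longleftrightarrow> 0 < pow_arrows N m x y"

definition is_component :: "nat \<Rightarrow> nat \<Rightarrow> int set set \<Rightarrow> bool" where
  "is_component N m S \<longleftrightarrow> stable_sub N m S \<and> S \<noteq> {} \<and>
     (\<forall>x y. x \<in> S \<and> (has_arrow_m N m x y \<or> has_arrow_m N m y x) \<longrightarrow> y \<in> S) \<and>
     \<not> (\<exists>A B. A \<noteq> {} \<and> B \<noteq> {} \<and> A \<inter> B = {} \<and> A \<union> B = S \<and>
           stable_sub N m A \<and> stable_sub N m B \<and>
           (\<forall>x\<in>A. \<forall>y\<in>B. \<not> has_arrow_m N m x y \<and> \<not> has_arrow_m N m y x))"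

end

theory Submission
  imports Defs
begin

text \<open>A diagonal \<open>(i,j)\<close> of the \<open>N\<close>-gon is determined up to rotation by its length
  \<open>a = (j - i) mod N\<close>; it is an \<open>m\<close>-diagonal iff \<open>m\<close> divides both \<open>a - 1\<close> and \<open>N - a - 1\<close>.
  Adding the two forces \<open>m | N - 2\<close>, and for \<open>N = nm + 2\<close> the \<open>m\<close>-diagonals are exactly those
  of length \<open>1 + km\<close> with \<open>0 < k < n\<close>.

  In \<open>\<Gamma>\<^sup>1\<close> a sectional path can never switch the endpoint it rotates about, since that
  would close a mesh. So a sectional path of length \<open>m\<close> from \<open>(i,j)\<close> is one of the two
  rotations, ending at \<open>(i,j+m)\<close> or \<open>(j,i+m)\<close>. Between \<open>m\<close>-diagonals only the first can
  occur, and it never wraps around, so it is the unique arrow \<open>(i,j) \<rightarrow> (i,j+m)\<close> of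
  \<open>\<Gamma>\<^sup>m\<close>.

  For connectedness, consecutive \<open>m\<close>-diagonals of the fan at a vertex \<open>b\<close> are joined by
  arrows. The last diagonal of the fan at \<open>b\<close> is the first one of the fan at \<open>b + m + 1\<close>,
  and \<open>\<tau>\<^sub>m\<close> carries it back to the first diagonal of the fan at \<open>b + 1\<close>.\<close>

lemma dg_commute: "dg N i j = dg N j i"
  unfolding dg_def by auto

lemma dg_eq_iff:
  "dg N i j = dg N i' j' \<longleftrightarrow>
     (i mod int N = i' mod int N \<and> j mod int N = j' mod int N) \<or>
     (i mod int N = j' mod int N \<and> j mod int N = i' mod int N)"
  unfolding dg_def by (auto simp: doubleton_eq_iff)

lemma dg_mod_cong: "i mod int N = i' mod int N \<Longrightarrow> j mod int N = j' mod int N \<Longrightarrow> dg N i j = dg N i' j'"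
  unfolding dg_eq_iff by simp

lemma dg_eq_imp_lengths:
  assumes "dg N i j = dg N i' j'"
  shows "(j - i) mod int N = (j' - i') mod int N \<and> (i - j) mod int N = (i' - j') mod int N \<or>
         (j - i) mod int N = (i' - j') mod int N \<and> (i - j) mod int N = (j' - i') mod int N"
  using assms unfolding dg_eq_iff by (auto intro: mod_diff_cong)

lemma tau1_dg: "tau1 N (dg N i j) = dg N (i - 1) (j - 1)"
  unfolding tau1_def dg_def by (simp add: mod_diff_left_eq)

lemma tau_m_dg: "tau_m N m (dg N i j) = dg N (i - int m) (j - int m)"
  unfolding tau_m_def dg_def by (simp add: mod_diff_left_eq)

lemma funpow_tau1: "m \<ge> 1 \<Longrightarrow> tau1 N ^^ m = tau_m N m"
proof (induction m rule: nat_induct_at_least)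
  case base
  show ?case by (auto simp: tau1_def tau_m_def)
next
  case (Suc m)
  have "tau1 N (tau_m N m D) = tau_m N (Suc m) D" for D
    unfolding tau1_def tau_m_def image_image by (simp add: mod_diff_left_eq algebra_simps)
  then show ?case using Suc.IH by auto
qed

lemma mod_minus_length:
  "(i - j) mod int N = (if (j - i) mod int N = 0 then 0 else int N - (j - i) mod int N)"
  using zmod_zminus1_eq_if[of "j - i" "int N"] by simp

lemma is_diag_dg_iff:
  assumes "N > 0"
  shows "is_diag N (dg N i j) \<longleftrightarrow> 2 \<le> (j - i) mod int N \<and> (j - i) mod int N \<le> int N - 2"
proof -
  have range: "x mod int N \<noteq> 0 \<and> x mod int N \<noteq> 1 \<and> x mod int N \<noteq> int N - 1 \<longleftrightarrow>
      2 \<le> x mod int N \<and> x mod int N \<le> int N - 2" for x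
  proof -
    have "0 \<le> x mod int N" "x mod int N < int N" using assms by simp_all
    then show ?thesis by auto
  qed
  have "2 \<le> (j - i) mod int N \<and> (j - i) mod int N \<le> int N - 2"
    if "dg N i j = dg N i' j'" "2 \<le> (j' - i') mod int N \<and> (j' - i') mod int N \<le> int N - 2" for i' j'
    using dg_eq_imp_lengths[OF that(1)] that(2) mod_minus_length[of i' j' N] by auto
  then show ?thesis
    unfolding is_diag_def range by blast
qed

lemma m_diag_dg_iff:
  assumes "N > 0"
  shows "m_diag N m (dg N i j) \<longleftrightarrow>
    is_diag N (dg N i j) \<and> int m dvd (j - i) mod int N - 1 \<and> int m dvd (i - j) mod int N - 1"
proof -
  have dvd: "(x mod int N + 1) mod int m = 2 mod int m \<longleftrightarrow> int m dvd x mod int N - 1" for x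
    by (simp add: mod_eq_dvd_iff)
  show ?thesis
    unfolding m_diag_def dvd using dg_eq_imp_lengths by metis
qed

lemma m_diag_dg_translate:
  assumes "N > 0"
  shows "m_diag N m (dg N (i + t) (j + t)) \<longleftrightarrow> m_diag N m (dg N i j)"
  unfolding m_diag_dg_iff[OF assms] is_diag_dg_iff[OF assms] by simp

lemma tau_m_image_m_diags:
  assumes N0: "N > 0"
  shows "tau_m N m ` Collect (m_diag N m) = Collect (m_diag N m)"
proof (intro equalityI subsetI)
  fix D assume "D \<in> tau_m N m ` Collect (m_diag N m)"
  then obtain i j where "D = tau_m N m (dg N i j)" "m_diag N m (dg N i j)"
    unfolding m_diag_def by blast
  then show "D \<in> Collect (m_diag N m)"
    using m_diag_dg_translate[OF N0, of m i "- int m" j] by (simp add: tau_m_dg)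
next
  fix D assume "D \<in> Collect (m_diag N m)"
  then obtain i j where D: "D = dg N i j" "m_diag N m (dg N i j)"
    unfolding m_diag_def by blast
  then have "m_diag N m (dg N (i + int m) (j + int m))" using m_diag_dg_translate[OF N0] by simp
  moreover have "D = tau_m N m (dg N (i + int m) (j + int m))" using D by (simp add: tau_m_dg)
  ultimately show "D \<in> tau_m N m ` Collect (m_diag N m)" by blast
qed

lemma m_diag_imp_polygon_size:
  assumes N: "N \<ge> 3" and D: "m_diag N m D"
  shows "\<exists>n>0. N = n * m + 2"
proof -
  have N0: "N > 0" using N by simp
  obtain i j where DD: "D = dg N i j" using D unfolding m_diag_def by blast
  have "2 \<le> (j - i) mod int N" "int m dvd (j - i) mod int N - 1" "int m dvd (i - j) mod int N - 1"
    using D DD m_diag_dg_iff[OF N0] is_diag_dg_iff[OF N0] by auto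
  moreover have "((j - i) mod int N - 1) + ((i - j) mod int N - 1) = int N - 2"
    if "2 \<le> (j - i) mod int N"
    using that mod_minus_length[of i j N] by simp
  ultimately have "int m dvd int N - 2" by (metis dvd_add)
  then obtain c where c: "int N - 2 = int m * c" by blast
  have "0 < int m * c" using c N by linarith
  then have "0 < c" by (simp add: zero_less_mult_iff)
  then have "int (nat c * m + 2) = int N" using c by (simp add: algebra_simps)
  then have "N = nat c * m + 2" by (simp only: of_nat_eq_iff)
  then show ?thesis using \<open>0 < c\<close> by (intro exI[of _ "nat c"]) simp
qed

lemma of_nat_mult_add_le: "k < n \<Longrightarrow> int k * int m + int m \<le> int n * int m"
  using mult_le_mono1[of "Suc k" n m] by (simp add: algebra_simps flip: of_nat_mult of_nat_add)

lemma m_diag_dg_iff_dvd: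
  assumes N: "N = n * m + 2"
  shows "m_diag N m (dg N i j) \<longleftrightarrow>
    2 \<le> (j - i) mod int N \<and> (j - i) mod int N \<le> int N - 2 \<and> int m dvd (j - i) mod int N - 1"
proof -
  define a where "a = (j - i) mod int N"
  have "int m dvd (i - j) mod int N - 1 \<longleftrightarrow> int m dvd a - 1" if "2 \<le> a"
  proof -
    have eq: "(i - j) mod int N - 1 = int m * int n - (a - 1)"
      using that N mod_minus_length[of i j N] unfolding a_def by auto
    show ?thesis unfolding eq by (rule dvd_diff_right_iff) simp
  qed
  then show ?thesis
    using N m_diag_dg_iff[of N m i j] is_diag_dg_iff[of N i j] unfolding a_def by auto
qed

lemma m_diag_dg_iff_length:
  assumes N: "N = n * m + 2" and m: "m \<ge> 1"
  shows "m_diag N m (dg N i j) \<longleftrightarrow> (\<exists>k. 0 < k \<and> k < n \<and> (j - i) mod int N = 1 + int k * int m)"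
proof -
  define a where "a = (j - i) mod int N"
  have "2 \<le> a \<and> a \<le> int N - 2 \<and> int m dvd a - 1 \<longleftrightarrow> (\<exists>k. 0 < k \<and> k < n \<and> a = 1 + int k * int m)"
  proof
    assume a: "2 \<le> a \<and> a \<le> int N - 2 \<and> int m dvd a - 1"
    then obtain c where c: "a - 1 = int m * c" by blast
    have "0 < c" using a c m zero_less_mult_pos[of "int m" c] by simp
    moreover have "int m * c < int m * int n" using a c N by (simp add: mult.commute)
    then have "c < int n" using m by simp
    ultimately show "\<exists>k. 0 < k \<and> k < n \<and> a = 1 + int k * int m"
      using c by (intro exI[of _ "nat c"]) (simp add: algebra_simps)
  next
    assume "\<exists>k. 0 < k \<and> k < n \<and> a = 1 + int k * int m"
    then obtain k where k: "0 < k" "k < n" and a: "a = 1 + int k * int m" by blast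
    have "int m \<le> int k * int m" using k mult_right_mono[of 1 "int k" "int m"] by simp
    moreover have "int N = int n * int m + 2" "1 \<le> int m" using N m by simp_all
    ultimately have "2 \<le> a" "a \<le> int N - 2" using a of_nat_mult_add_le[OF k(2), of m] by linarith+
    then show "2 \<le> a \<and> a \<le> int N - 2 \<and> int m dvd a - 1" using a by simp
  qed
  then show ?thesis using m_diag_dg_iff_dvd[OF N] unfolding a_def by simp
qed

lemma m_diag_dgI:
  assumes N: "N = n * m + 2" and m: "m \<ge> 1" and k: "0 < k" "k < n"
  shows "m_diag N m (dg N b (b + 1 + int k * int m))"
proof -
  have "(b + 1 + int k * int m - b) mod int N = 1 + int k * int m"
    using N of_nat_mult_add_le[OF k(2), of m] by simp
  then show ?thesis using m_diag_dg_iff_length[OF N m] k by blast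
qed

lemma m_diag_dgE:
  assumes N: "N = n * m + 2" and m: "m \<ge> 1" and D: "m_diag N m D"
  obtains b k where "0 < k" "k < n" "D = dg N b (b + 1 + int k * int m)"
proof -
  obtain i j where ij: "D = dg N i j" using D unfolding m_diag_def by blast
  then obtain k where k: "0 < k" "k < n" and len: "(j - i) mod int N = 1 + int k * int m"
    using D m_diag_dg_iff_length[OF N m] by blast
  have "dg N i j = dg N i (i + ((j - i) mod int N))"
    by (rule dg_mod_cong) (simp_all add: mod_add_right_eq)
  then show ?thesis using that[OF k] ij len by (simp add: add.assoc)
qed

lemma m_diag_length_add:
  assumes N: "N = n * m + 2" and m: "m \<ge> 1" and D: "m_diag N m (dg N i j)" and l: "l \<le> m"
  shows "(j + int l - i) mod int N = (j - i) mod int N + int l"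
proof -
  obtain k where k: "0 < k" "k < n" and len: "(j - i) mod int N = 1 + int k * int m"
    using D m_diag_dg_iff_length[OF N m] by blast
  have "j + int l - i = (j - i) + int l" by simp
  then have "(j + int l - i) mod int N = ((j - i) mod int N + int l) mod int N"
    by (metis mod_add_left_eq)
  also have "\<dots> = (j - i) mod int N + int l"
    using len l N of_nat_mult_add_le[OF k(2), of m] by simp
  finally show ?thesis .
qed

lemma m_diag_rotate_iff:
  assumes N: "N = n * m + 2" and m: "m \<ge> 1"
    and diags: "is_diag N (dg N i j)" "is_diag N (dg N i (j + int m))"
  shows "m_diag N m (dg N i (j + int m)) \<longleftrightarrow> m_diag N m (dg N i j)"
proof
  assume D: "m_diag N m (dg N i j)"
  then obtain k where k: "0 < k" "k < n" and len: "(j - i) mod int N = 1 + int k * int m"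
    using m_diag_dg_iff_length[OF N m] by blast
  have len': "(j + int m - i) mod int N = 1 + int (Suc k) * int m"
    using m_diag_length_add[OF N m D, of m] len by (simp add: algebra_simps)
  moreover have "Suc k \<noteq> n"
    using len' diags(2) is_diag_dg_iff[of N i "j + int m"] N by auto
  ultimately show "m_diag N m (dg N i (j + int m))"
    using k m_diag_dg_iff_length[OF N m] by (metis Suc_lessI zero_less_Suc)
next
  assume "m_diag N m (dg N i (j + int m))"
  then obtain k where k: "0 < k" "k < n" and len: "(j + int m - i) mod int N = 1 + int k * int m"
    using m_diag_dg_iff_length[OF N m] by blast
  then obtain k' where k': "k = Suc k'" using not0_implies_Suc by blast
  have "(j - i) mod int N = (1 + int k' * int m) mod int N"
    using len k' mod_diff_left_eq[of "j + int m - i" "int N" "int m"] by (simp add: algebra_simps)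
  also have "\<dots> = 1 + int k' * int m"
    using k k' N of_nat_mult_add_le[of k' n m] by simp
  finally have len_k': "(j - i) mod int N = 1 + int k' * int m" .
  moreover have "2 \<le> (j - i) mod int N" using diags(1) is_diag_dg_iff N by simp
  ultimately have "k' \<noteq> 0" by (intro notI) simp
  then show "m_diag N m (dg N i j)"
    using k k' len_k' m_diag_dg_iff_length[OF N m] by auto
qed

lemma m_diag_rotation_is_diag:
  assumes N: "N = n * m + 2" and m: "m \<ge> 1"
    and D: "m_diag N m (dg N i j)" and D': "is_diag N (dg N i (j + int m))" and l: "l \<le> m"
  shows "is_diag N (dg N i (j + int l))"
proof -
  have N0: "N > 0" using N by simp
  have "2 \<le> (j - i) mod int N"
    using D m_diag_dg_iff[OF N0] is_diag_dg_iff[OF N0] by blast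
  moreover have "(j + int m - i) mod int N \<le> int N - 2"
    using D' is_diag_dg_iff[OF N0] by blast
  ultimately show ?thesis
    using m_diag_length_add[OF N m D l] m_diag_length_add[OF N m D order_refl] l is_diag_dg_iff[OF N0]
    by simp
qed

lemma arrow1_dg_cases:
  assumes "arrow1 N (dg N i j) D'"
  shows "D' = dg N i (j + 1) \<or> D' = dg N (i + 1) j"
proof -
  obtain i' j' where e: "dg N i j = dg N i' j'" and D': "D' = dg N i' (j' + 1)"
    using assms unfolding arrow1_def by blast
  from e[unfolded dg_eq_iff] show ?thesis
  proof
    assume "i mod int N = i' mod int N \<and> j mod int N = j' mod int N"
    then have "D' = dg N i (j + 1)" using D' by (metis dg_mod_cong mod_add_cong)
    then show ?thesis ..
  next
    assume "i mod int N = j' mod int N \<and> j mod int N = i' mod int N"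
    then have "D' = dg N j (i + 1)" using D' by (metis dg_mod_cong mod_add_cong)
    then show ?thesis by (simp add: dg_commute)
  qed
qed

definition rotation_path :: "nat \<Rightarrow> int \<Rightarrow> int \<Rightarrow> nat \<Rightarrow> int set list" where
  "rotation_path N i j m = map (\<lambda>l. dg N i (j + int l)) [0..<Suc m]"

lemma length_rotation_path [simp]: "length (rotation_path N i j m) = Suc m"
  by (simp add: rotation_path_def)

lemma nth_rotation_path [simp]: "l \<le> m \<Longrightarrow> rotation_path N i j m ! l = dg N i (j + int l)"
  by (simp add: rotation_path_def nth_map del: upt_Suc)

lemma hd_rotation_path [simp]: "hd (rotation_path N i j m) = dg N i j"
  by (simp add: rotation_path_def hd_map upt_conv_Cons del: upt_Suc)

lemma last_rotation_path [simp]: "last (rotation_path N i j m) = dg N i (j + int m)"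
  by (simp add: rotation_path_def last_map del: upt_Suc)

lemma sectionalD:
  assumes "sectional N p"
  shows "Suc k < length p \<Longrightarrow> arrow1 N (p ! k) (p ! Suc k)"
    and "Suc (Suc k) < length p \<Longrightarrow> tau1 N (p ! Suc (Suc k)) \<noteq> p ! k"
  using assms unfolding sectional_def by (simp, elim conjE allE[of _ "Suc k"], simp)

text \<open>A sectional path never turns back: once it starts rotating about the endpoint \<open>i\<close>,
  switching to the other endpoint would close a mesh \<open>\<tau>\<^sub>1 x\<^sub>l\<^sub>+\<^sub>2 = x\<^sub>l\<close>.\<close>
lemma sectional_eq_rotation_path:
  assumes s: "sectional N p" and len: "length p = Suc m"
    and p0: "p ! 0 = dg N i j" and p1: "p ! 1 = dg N i (j + 1)"
  shows "p = rotation_path N i j m"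
proof -
  have "p ! l = dg N i (j + int l)" if "l < length p" for l
    using that
  proof (induction l rule: less_induct)
    case (less l)
    show ?case
    proof (cases "l < 2")
      case True
      then show ?thesis using p0 p1 by (auto simp: less_2_cases_iff)
    next
      case False
      then obtain l' where l: "l = Suc (Suc l')" by (metis less_2_cases_iff not0_implies_Suc not_less_eq)
      have prev: "p ! l' = dg N i (j + int l')" "p ! Suc l' = dg N i (j + int l' + 1)"
        using less l by (simp_all add: ac_simps)
      have "arrow1 N (p ! Suc l') (p ! l)"
        using sectionalD(1)[OF s] less.prems l by simp
      then have "p ! l = dg N i (j + int l' + 1 + 1) \<or> p ! l = dg N (i + 1) (j + int l' + 1)"
        using arrow1_dg_cases prev(2) by metis
      moreover have "tau1 N (dg N (i + 1) (j + int l' + 1)) = p ! l'"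
        using prev(1) by (simp add: tau1_dg)
      moreover have "tau1 N (p ! l) \<noteq> p ! l'"
        using sectionalD(2)[OF s] less.prems l by simp
      ultimately have "p ! l = dg N i (j + int l' + 1 + 1)" by metis
      then show ?thesis using l by (simp add: ac_simps)
    qed
  qed
  then show ?thesis using len by (intro nth_equalityI) simp_all
qed

lemma sect_paths_dg_subset:
  assumes m: "m \<ge> 1"
  shows "sect_paths N m (dg N i j) y \<subseteq> {rotation_path N i j m, rotation_path N j i m}"
proof
  fix p assume "p \<in> sect_paths N m (dg N i j) y"
  then have s: "sectional N p" and len: "length p = Suc m" and "hd p = dg N i j"
    unfolding sect_paths_def by auto
  moreover have "p \<noteq> []" using len by auto
  ultimately have p0: "p ! 0 = dg N i j" by (simp add: hd_conv_nth)
  have "arrow1 N (p ! 0) (p ! 1)" using s len m unfolding sectional_def by auto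
  then have "p ! 1 = dg N i (j + 1) \<or> p ! 1 = dg N j (i + 1)"
    using arrow1_dg_cases p0 dg_commute by metis
  then show "p \<in> {rotation_path N i j m, rotation_path N j i m}"
  proof
    assume "p ! 1 = dg N i (j + 1)"
    then show ?thesis using sectional_eq_rotation_path[OF s len p0] by simp
  next
    assume "p ! 1 = dg N j (i + 1)"
    moreover have "p ! 0 = dg N j i" using p0 dg_commute by metis
    ultimately show ?thesis using sectional_eq_rotation_path[OF s len] by simp
  qed
qed

lemma sect_paths_is_diag:
  assumes "p \<in> sect_paths N m x y" and "m \<ge> 1"
  shows "is_diag N x" "is_diag N y"
proof -
  have s: "sectional N p" and len: "length p = Suc m" and "hd p = x" "last p = y"
    using assms unfolding sect_paths_def by auto
  moreover have "p \<noteq> []" using len by auto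
  ultimately have "x = p ! 0" "y = p ! m" by (simp_all add: hd_conv_nth last_conv_nth)
  moreover have "arrow1 N (p ! 0) (p ! 1)" "arrow1 N (p ! (m - 1)) (p ! m)"
    using s len assms(2) unfolding sectional_def by (auto dest: spec[of _ "m - 1"])
  ultimately show "is_diag N x" "is_diag N y" unfolding arrow1_def by auto
qed

lemma sect_paths_endpoints:
  assumes p: "p \<in> sect_paths N m x y" and m: "m \<ge> 1"
  obtains i j where "x = dg N i j" "y = dg N i (j + int m)"
proof -
  obtain i j where x: "x = dg N i j" using sect_paths_is_diag[OF p m] unfolding is_diag_def by blast
  have "p \<in> {rotation_path N i j m, rotation_path N j i m}"
    using sect_paths_dg_subset[OF m] p x by blast
  moreover have "last p = y" using p unfolding sect_paths_def by simp
  ultimately have "y = dg N i (j + int m) \<or> y = dg N j (i + int m)" by auto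
  then show ?thesis using that x dg_commute[of N i j] by blast
qed

lemma has_arrow_m_dg:
  assumes "has_arrow_m N m x y" and m: "m \<ge> 1"
  obtains i j where "x = dg N i j" "y = dg N i (j + int m)" "is_diag N x" "is_diag N y"
proof -
  obtain p where p: "p \<in> sect_paths N m x y"
    using assms(1) unfolding has_arrow_m_def pow_arrows_def by (metis card.empty ex_in_conv less_irrefl)
  show ?thesis using that sect_paths_endpoints[OF p m] sect_paths_is_diag[OF p m] by blast
qed

lemma rotation_path_sectional:
  assumes N: "N > 1" and diags: "\<And>l. l \<le> m \<Longrightarrow> is_diag N (dg N i (j + int l))"
  shows "sectional N (rotation_path N i j m)"
  unfolding sectional_def
proof (intro conjI allI impI)
  fix k assume k: "k + 1 < length (rotation_path N i j m)"
  then have nth: "rotation_path N i j m ! k = dg N i (j + int k)"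
    "rotation_path N i j m ! (k + 1) = dg N i (j + int k + 1)"
    by (simp_all add: ac_simps)
  have "is_diag N (dg N i (j + int k))" "is_diag N (dg N i (j + int k + 1))"
    using k diags[of k] diags[of "k + 1"] by (simp_all add: ac_simps)
  then show "arrow1 N (rotation_path N i j m ! k) (rotation_path N i j m ! (k + 1))"
    unfolding arrow1_def nth by blast
next
  fix k assume k: "1 \<le> k \<and> k + 1 < length (rotation_path N i j m)"
  have "(i - 1) mod int N \<noteq> i mod int N"
    using N by (auto simp: mod_eq_dvd_iff)
  moreover have "(j + int k) mod int N \<noteq> i mod int N"
    using diags[of k] k N is_diag_dg_iff[of N i "j + int k"] by (auto simp: mod_eq_dvd_iff dvd_eq_mod_eq_0)
  ultimately have "dg N (i - 1) (j + int k) \<noteq> dg N i (j + int k - 1)"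
    unfolding dg_eq_iff by auto
  moreover have "tau1 N (rotation_path N i j m ! (k + 1)) = dg N (i - 1) (j + int k)"
    using k by (simp add: tau1_dg)
  moreover have "rotation_path N i j m ! (k - 1) = dg N i (j + int k - 1)"
  proof -
    have "rotation_path N i j m ! (k - 1) = dg N i (j + int (k - 1))"
    proof (rule nth_rotation_path)
      show "k - 1 \<le> m" using k by simp linarith
    qed
    moreover have "j + int (k - 1) = j + int k - 1" using k by simp
    ultimately show ?thesis by (simp only:)
  qed
  ultimately show "tau1 N (rotation_path N i j m ! (k + 1)) \<noteq> rotation_path N i j m ! (k - 1)"
    by (simp only: not_False_eq_True)
qed

lemma dg_rotations_neq:
  assumes ij: "(j - i) mod int N \<noteq> 0" and m: "0 < m" "m < N"
  shows "dg N j (i + int m) \<noteq> dg N i (j + int m)"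
proof
  assume "dg N j (i + int m) = dg N i (j + int m)"
  then consider "j mod int N = i mod int N" | "j mod int N = (j + int m) mod int N"
    unfolding dg_eq_iff by blast
  then show False
  proof cases
    case 1
    then have "int N dvd j - i" by (simp add: mod_eq_dvd_iff)
    then show False using ij by simp
  next
    case 2
    then have "int N dvd int m" by (simp add: mod_eq_dvd_iff)
    then show False using m zdvd_imp_le[of "int N" "int m"] by simp
  qed
qed

lemma pow_arrows_m_diags:
  assumes N: "N = n * m + 2" and m: "m \<ge> 1" and D: "m_diag N m D" and D': "m_diag N m D'"
  shows "pow_arrows N m D D' = (if arrowA N m D D' then 1 else 0)"
proof (cases "arrowA N m D D'")
  case False
  have "sect_paths N m D D' = {}"
  proof (rule ccontr)
    assume "sect_paths N m D D' \<noteq> {}"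
    then obtain p where p: "p \<in> sect_paths N m D D'" by blast
    obtain i j where "D = dg N i j" "D' = dg N i (j + int m)"
      by (rule sect_paths_endpoints[OF p m])
    then show False using False D D' unfolding arrowA_def by blast
  qed
  then show ?thesis using False unfolding pow_arrows_def by simp
next
  case True
  then obtain i j where DD: "D = dg N i j" and DD': "D' = dg N i (j + int m)"
    unfolding arrowA_def by blast
  have N0: "N > 0" using N by simp
  have len: "2 \<le> (j - i) mod int N"
    using D DD m_diag_dg_iff[OF N0] is_diag_dg_iff[OF N0] by blast
  have "0 < n" using D DD m_diag_dg_iff_length[OF N m] by auto
  then have "m \<le> n * m" by simp
  then have "m < N" using N by linarith
  have "is_diag N D'" using D' unfolding m_diag_def by blast
  then have diags: "is_diag N (dg N i (j + int l))" if "l \<le> m" for l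
    using m_diag_rotation_is_diag[OF N m D[unfolded DD] _ that] DD' by simp
  have "N > 1" using N by simp
  then have P: "rotation_path N i j m \<in> sect_paths N m D D'"
    unfolding sect_paths_def using rotation_path_sectional diags DD DD' by simp
  have "dg N j (i + int m) \<noteq> dg N i (j + int m)"
    using dg_rotations_neq len m \<open>m < N\<close> by simp
  then have "rotation_path N j i m \<notin> sect_paths N m D D'"
    unfolding sect_paths_def DD' by auto
  then have "sect_paths N m D D' = {rotation_path N i j m}"
    using sect_paths_dg_subset[OF m, of N i j D'] P DD by auto
  then show ?thesis using True unfolding pow_arrows_def by simp
qed

lemma has_arrow_m_rotation:
  assumes N: "N = n * m + 2" and m: "m \<ge> 1"
    and D: "m_diag N m (dg N i j)" and D': "m_diag N m (dg N i (j + int m))"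
  shows "has_arrow_m N m (dg N i j) (dg N i (j + int m))"
  using pow_arrows_m_diags[OF N m D D'] D D' unfolding has_arrow_m_def arrowA_def by auto

lemma m_diag_arrow_closed:
  assumes N: "N = n * m + 2" and m: "m \<ge> 1"
    and x: "m_diag N m x" and arrow: "has_arrow_m N m x y \<or> has_arrow_m N m y x"
  shows "m_diag N m y"
  using arrow
proof
  assume "has_arrow_m N m x y"
  then obtain i j where "x = dg N i j" "y = dg N i (j + int m)" "is_diag N x" "is_diag N y"
    using has_arrow_m_dg m by metis
  then show ?thesis using m_diag_rotate_iff[OF N m] x by simp
next
  assume "has_arrow_m N m y x"
  then obtain i j where "y = dg N i j" "x = dg N i (j + int m)" "is_diag N x" "is_diag N y"
    using has_arrow_m_dg m by metis
  then show ?thesis using m_diag_rotate_iff[OF N m] x by simp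
qed

definition m_arrow_closed :: "nat \<Rightarrow> nat \<Rightarrow> int set set \<Rightarrow> bool" where
  "m_arrow_closed N m X \<longleftrightarrow>
     (\<forall>x\<in>X. \<forall>y. m_diag N m y \<longrightarrow> has_arrow_m N m x y \<or> has_arrow_m N m y x \<longrightarrow> y \<in> X)"

lemma m_diag_fan_mem_iff:
  assumes N: "N = n * m + 2" and m: "m \<ge> 1"
    and closed: "m_arrow_closed N m X"
    and k: "0 < k" "k < n"
  shows "dg N b (b + 1 + int k * int m) \<in> X \<longleftrightarrow> dg N b (b + 1 + int m) \<in> X"
  using k
proof (induction k)
  case 0
  then show ?case by simp
next
  case (Suc k)
  show ?case
  proof (cases "k = 0")
    case True
    then show ?thesis by simp
  next
    case False
    let ?x = "dg N b (b + 1 + int k * int m)" and ?y = "dg N b (b + 1 + int k * int m + int m)"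
    have eq: "b + 1 + int (Suc k) * int m = b + 1 + int k * int m + int m"
      by (simp add: algebra_simps)
    have x: "m_diag N m ?x" using m_diag_dgI[OF N m] False Suc.prems by simp
    moreover have y: "m_diag N m ?y"
      using m_diag_dgI[OF N m, of "Suc k" b] Suc.prems unfolding eq by simp
    ultimately have "has_arrow_m N m ?x ?y" by (rule has_arrow_m_rotation[OF N m])
    then have "?y \<in> X \<longleftrightarrow> ?x \<in> X" using closed x y unfolding m_arrow_closed_def by blast
    then show ?thesis unfolding eq using Suc False by simp
  qed
qed

lemma m_diag_fan_step:
  assumes N: "N = n * m + 2" and m: "m \<ge> 1" and n: "n \<ge> 2"
    and tau: "tau_m N m ` X \<subseteq> X"
    and closed: "m_arrow_closed N m X"
    and b: "dg N b (b + 1 + int m) \<in> X"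
  shows "dg N (b + 1) (b + 1 + 1 + int m) \<in> X"
proof -
  let ?c = "b + int m + 1"
  have "?c + 1 + int (n - 1) * int m = b + int N"
    using N n by (simp add: of_nat_diff algebra_simps)
  then have "dg N b (b + 1 + int m) = dg N ?c (?c + 1 + int (n - 1) * int m)"
    by (subst dg_commute) (rule dg_mod_cong; simp add: algebra_simps)
  then have "dg N ?c (?c + 1 + int m) \<in> X"
    using b m_diag_fan_mem_iff[OF N m closed, where k = "n - 1" and b = ?c] n by simp
  then have "tau_m N m (dg N ?c (?c + 1 + int m)) \<in> X" using tau by blast
  then show ?thesis by (simp add: tau_m_dg algebra_simps)
qed

lemma m_diags_connected:
  assumes N: "N = n * m + 2" and m: "m \<ge> 1"
    and sub: "X \<subseteq> Collect (m_diag N m)" and ne: "X \<noteq> {}" and stable: "stable_sub N m X"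
    and closed: "m_arrow_closed N m X"
  shows "X = Collect (m_diag N m)"
proof -
  have N0: "N > 0" using N by simp
  have tau: "tau_m N m ` X \<subseteq> X"
    using stable unfolding stable_sub_def funpow_tau1[OF m] by blast
  note fan = m_diag_fan_mem_iff[OF N m closed]
  obtain x0 where x0: "x0 \<in> X" using ne by blast
  then obtain b0 k0 where k0: "0 < k0" "k0 < n" and x0_eq: "x0 = dg N b0 (b0 + 1 + int k0 * int m)"
    using sub m_diag_dgE[OF N m] by blast
  define Q where "Q b \<longleftrightarrow> dg N b (b + 1 + int m) \<in> X" for b
  have n: "n \<ge> 2" using k0 by simp
  have shift: "Q (b + int t)" if "Q b" for b t
  proof (induction t)
    case 0
    then show ?case using that by simp
  next
    case (Suc t)
    have "dg N (b + int t + 1) (b + int t + 1 + 1 + int m) \<in> X"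
      by (rule m_diag_fan_step[OF N m n tau closed]) (use Suc in \<open>simp add: Q_def\<close>)
    then show ?case unfolding Q_def by (simp add: algebra_simps)
  qed
  have Q: "Q b" for b
  proof -
    define c where "c = b0 + int (nat ((b - b0) mod int N))"
    have "Q b0" using fan[OF k0] x0 x0_eq unfolding Q_def by simp
    then have "Q c" unfolding c_def by (rule shift)
    moreover have "int (nat ((b - b0) mod int N)) = (b - b0) mod int N"
      using N0 by simp
    then have c: "c mod int N = b mod int N"
      unfolding c_def by (simp add: mod_add_right_eq)
    then have "(c + 1 + int m) mod int N = (b + 1 + int m) mod int N"
      by (metis mod_add_cong)
    then have "dg N c (c + 1 + int m) = dg N b (b + 1 + int m)"
      by (rule dg_mod_cong[OF c])
    ultimately show ?thesis unfolding Q_def by simp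
  qed
  show ?thesis
  proof
    show "Collect (m_diag N m) \<subseteq> X"
    proof
      fix D assume "D \<in> Collect (m_diag N m)"
      then obtain b k where k: "0 < k" "k < n" and D: "D = dg N b (b + 1 + int k * int m)"
        using m_diag_dgE[OF N m] by blast
      show "D \<in> X" using fan[OF k, of b] Q[of b] unfolding D Q_def by simp
    qed
  qed (rule sub)
qed

lemma is_component_m_diags:
  assumes n: "n \<ge> 2" and m: "m \<ge> 1"
  shows "is_component (n * m + 2) m (Collect (m_diag (n * m + 2) m))"
proof -
  define N where "N = n * m + 2"
  define S where "S = Collect (m_diag N m)"
  have N0: "N > 0" unfolding N_def by simp
  have tau: "tau1 N ^^ m = tau_m N m" using funpow_tau1 m by blast
  have closed: "y \<in> S" if "x \<in> S" "has_arrow_m N m x y \<or> has_arrow_m N m y x" for x y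
    using m_diag_arrow_closed[OF N_def m] that unfolding S_def by blast
  have all: "A = S"
    if "A \<noteq> {}" "A \<subseteq> S" "stable_sub N m A"
      and "\<forall>x\<in>A. \<forall>y\<in>S - A. \<not> has_arrow_m N m x y \<and> \<not> has_arrow_m N m y x" for A
  proof -
    have "m_arrow_closed N m A"
      using that(4) unfolding m_arrow_closed_def S_def by blast
    then show ?thesis
      using m_diags_connected[OF N_def m] that(1-3) unfolding S_def by blast
  qed
  have "stable_sub N m S"
    unfolding stable_sub_def tau S_def using tau_m_image_m_diags[OF N0] unfolding m_diag_def by auto
  moreover have "S \<noteq> {}" using m_diag_dgI[OF N_def m, of 1 0] n unfolding S_def by auto
  moreover have "\<not> (\<exists>A B. A \<noteq> {} \<and> B \<noteq> {} \<and> A \<inter> B = {} \<and> A \<union> B = S \<and>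
           stable_sub N m A \<and> stable_sub N m B \<and>
           (\<forall>x\<in>A. \<forall>y\<in>B. \<not> has_arrow_m N m x y \<and> \<not> has_arrow_m N m y x))"
  proof
    assume "\<exists>A B. A \<noteq> {} \<and> B \<noteq> {} \<and> A \<inter> B = {} \<and> A \<union> B = S \<and>
           stable_sub N m A \<and> stable_sub N m B \<and>
           (\<forall>x\<in>A. \<forall>y\<in>B. \<not> has_arrow_m N m x y \<and> \<not> has_arrow_m N m y x)"
    then obtain A B where AB: "A \<noteq> {}" "B \<noteq> {}" "A \<inter> B = {}" "A \<union> B = S"
      "stable_sub N m A" "stable_sub N m B"
      and sep: "\<forall>x\<in>A. \<forall>y\<in>B. \<not> has_arrow_m N m x y \<and> \<not> has_arrow_m N m y x"
      by blast
    have "A = S" using all[of A] AB sep by blast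
    moreover have "B = S" using all[of B] AB sep by blast
    ultimately show False using AB by blast
  qed
  ultimately show ?thesis
    using closed unfolding is_component_def N_def[symmetric] S_def[symmetric] by blast
qed

theorem proposition7p1:
  fixes N m :: nat
  assumes "N \<ge> 3" and "m \<ge> 1"
  shows "((\<exists>D. m_diag N m D) \<longrightarrow> (\<exists>n>0. N = n * m + 2))
    \<and> (\<forall>n>0. N = n * m + 2 \<longrightarrow>
          (\<forall>D. m_diag N m D \<longrightarrow> m_diag N m ((tau1 N ^^ m) D) \<and> (tau1 N ^^ m) D = tau_m N m D)
        \<and> (\<forall>D D'. m_diag N m D \<and> m_diag N m D' \<longrightarrow>
             pow_arrows N m D D' = (if arrowA N m D D' then 1 else 0)))
    \<and> (\<forall>n\<ge>2. is_component (n * m + 2) m (Collect (m_diag (n * m + 2) m)))"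
proof (intro conjI allI impI)
  show "\<exists>n>0. N = n * m + 2" if "\<exists>D. m_diag N m D"
    using that m_diag_imp_polygon_size assms(1) by blast
next
  fix D assume "m_diag N m D"
  moreover have "tau_m N m ` Collect (m_diag N m) = Collect (m_diag N m)"
    using tau_m_image_m_diags assms(1) by simp
  ultimately show "m_diag N m ((tau1 N ^^ m) D)" "(tau1 N ^^ m) D = tau_m N m D"
    unfolding funpow_tau1[OF assms(2)] by blast+
next
  fix n D D' assume "N = n * m + 2" "m_diag N m D \<and> m_diag N m D'"
  then show "pow_arrows N m D D' = (if arrowA N m D D' then 1 else 0)"
    using pow_arrows_m_diags assms(2) by blast
next
  fix n :: nat assume "n \<ge> 2"
  then show "is_component (n * m + 2) m (Collect (m_diag (n * m + 2) m))"
    using is_component_m_diags assms(2) by blast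
qed

end
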